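(* Let $\mathcal{H}$ be a finite-dimensional Hilbert space. Every connected spanning set of pure states in $\mathcal{H}$ contains a subset that is a connected basis of $\mathcal{H}$. Every set of pure states in $\mathcal{H}$ that contains a connected spanning subset is itself a connected spanning set.
   Context: The transition graph of a set $\{|\psi_j\rangle\}$ of pure states has vertices the states, with two distinct vertices adjacent iff their inner product is nonzero; the set is connected if this graph is connected. A connected spanning set is a connected set spanning $\mathcal{H}$; a connected basis is a connected set that is a basis of $\mathcal{H}$. *)

theory Defs
  imports "HOL-Analysis.Analysis"
begin

text \<open>The finite-dimensional Hilbert space is modelled as complex^'n (any finite index type 'n),
  with the standard inner product (conjugate-linear in the first argument).
  Spans and linear independence are taken over the complex field (vec.span, vec.independent).\<close>

definition cinner :: "complex ^ 'n \<Rightarrow> complex ^ 'n \<Rightarrow> complex" where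
  "cinner x y = (\<Sum>i\<in>UNIV. cnj (x $ i) * y $ i)"

definition pure_state :: "complex ^ 'n \<Rightarrow> bool" where
  "pure_state x \<longleftrightarrow> cinner x x = 1"

definition transition_adj :: "(complex ^ 'n) set \<Rightarrow> complex ^ 'n \<Rightarrow> complex ^ 'n \<Rightarrow> bool" where
  "transition_adj S x y \<longleftrightarrow> x \<in> S \<and> y \<in> S \<and> x \<noteq> y \<and> cinner x y \<noteq> 0"

definition connected_states :: "(complex ^ 'n) set \<Rightarrow> bool" where
  "connected_states S \<longleftrightarrow> (\<forall>x\<in>S. \<forall>y\<in>S. (transition_adj S)\<^sup>*\<^sup>* x y)"

definition connected_spanning_set :: "(complex ^ 'n) set \<Rightarrow> bool" where
  "connected_spanning_set S \<longleftrightarrow>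
     (\<forall>x\<in>S. pure_state x) \<and> connected_states S \<and> vec.span S = UNIV"

definition connected_basis :: "(complex ^ 'n) set \<Rightarrow> bool" where
  "connected_basis B \<longleftrightarrow>
     (\<forall>x\<in>B. pure_state x) \<and> connected_states B \<and> vec.independent B \<and> vec.span B = UNIV"

end

theory Submission
  imports Defs
begin

text \<open>Let \<open>B\<close> be a largest connected, linearly independent subset of a connected spanning set
  \<open>S\<close>. If \<open>B\<close> did not span, some element of \<open>S\<close> would lie outside \<open>span B\<close>, and a path in
  the transition graph from \<open>B\<close> to it would contain an edge \<open>u v\<close> with \<open>u \<in> span B\<close>,
  \<open>v \<notin> span B\<close>. As \<open>v\<close> is not orthogonal to \<open>u\<close>, it is not orthogonal to some element of
  \<open>B\<close>, so \<open>insert v B\<close> is again connected and independent, contradicting maximality.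
  For the second claim, no pure state is orthogonal to a spanning set, so every state of
  \<open>T\<close> is adjacent to the connected set \<open>S \<subseteq> T\<close>.\<close>

lemma cinner_commute: "cinner y x = cnj (cinner x y)"
  by (simp add: cinner_def mult_ac)

lemma pure_state_nonzero: "pure_state x \<Longrightarrow> x \<noteq> 0"
  by (auto simp: pure_state_def cinner_def)

lemma subspace_orthogonal: "vec.subspace {y :: complex ^ 'n. cinner x y = 0}"
proof -
  have "(\<Sum>i\<in>UNIV. cnj (x $ i) * (c * y $ i)) = c * (\<Sum>i\<in>UNIV. cnj (x $ i) * y $ i)" for c y
    by (simp add: sum_distrib_left mult_ac)
  then show ?thesis
    unfolding vec.subspace_def by (auto simp: cinner_def distrib_left sum.distrib)
qed

lemma cinner_span_eq_zero:
  fixes x :: "complex ^ 'n"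
  assumes "\<forall>s\<in>S. cinner x s = 0" and "y \<in> vec.span S"
  shows "cinner x y = 0"
  using vec.span_minimal[of S "{y. cinner x y = 0}"] subspace_orthogonal assms by auto

lemma pure_state_not_orthogonal_spanning:
  fixes x :: "complex ^ 'n"
  assumes "vec.span S = UNIV" and "pure_state x"
  shows "\<exists>s\<in>S. cinner x s \<noteq> 0"
  using cinner_span_eq_zero[of S x x] assms by (auto simp: pure_state_def)

lemma transition_adj_mono: "S \<subseteq> T \<Longrightarrow> transition_adj S x y \<Longrightarrow> transition_adj T x y"
  by (auto simp: transition_adj_def)

lemma rtranclp_transition_adj_mono:
  "S \<subseteq> T \<Longrightarrow> (transition_adj S)\<^sup>*\<^sup>* x y \<Longrightarrow> (transition_adj T)\<^sup>*\<^sup>* x y"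
  by (metis (no_types, lifting) transition_adj_mono mono_rtranclp)

lemma symp_transition_adj: "symp (transition_adj S)"
  unfolding symp_def transition_adj_def by (metis cinner_commute complex_cnj_zero)

lemma rtranclp_transition_adj_sym:
  "(transition_adj S)\<^sup>*\<^sup>* x y \<Longrightarrow> (transition_adj S)\<^sup>*\<^sup>* y x"
  using symp_rtranclp[OF symp_transition_adj] by (rule sympD)

lemma rtranclp_crosses_boundary:
  "R\<^sup>*\<^sup>* x y \<Longrightarrow> P x \<Longrightarrow> \<not> P y \<Longrightarrow> \<exists>u v. R u v \<and> P u \<and> \<not> P v"
  by (induction rule: rtranclp_induct) auto

lemma connected_states_if_reaches:
  assumes "connected_states S" and "S \<subseteq> T"
    and reach: "\<And>x. x \<in> T \<Longrightarrow> \<exists>s\<in>S. (transition_adj T)\<^sup>*\<^sup>* x s"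
  shows "connected_states T"
  unfolding connected_states_def
proof (intro ballI)
  fix x y assume "x \<in> T" "y \<in> T"
  then obtain s t where "s \<in> S" "t \<in> S"
    and xs: "(transition_adj T)\<^sup>*\<^sup>* x s" and yt: "(transition_adj T)\<^sup>*\<^sup>* y t"
    using reach by blast
  then have "(transition_adj T)\<^sup>*\<^sup>* s t"
    using assms(1,2) rtranclp_transition_adj_mono unfolding connected_states_def by blast
  then show "(transition_adj T)\<^sup>*\<^sup>* x y"
    using xs rtranclp_transition_adj_sym[OF yt] by (meson rtranclp_trans)
qed

lemma connected_states_insert:
  assumes "connected_states B" and "b \<in> B" and "v \<noteq> b" and "cinner v b \<noteq> 0"
  shows "connected_states (insert v B)"
proof (rule connected_states_if_reaches[OF assms(1)])
  fix x assume "x \<in> insert v B"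
  moreover have "transition_adj (insert v B) v b"
    using assms(2-4) by (auto simp: transition_adj_def)
  ultimately show "\<exists>s\<in>B. (transition_adj (insert v B))\<^sup>*\<^sup>* x s"
    using assms(2) by blast
qed auto

lemma exists_adjacent_outside_span:
  assumes "connected_states S" and "B \<subseteq> S" and "B \<noteq> {}" and "\<not> S \<subseteq> vec.span B"
  shows "\<exists>v\<in>S. v \<notin> vec.span B \<and> (\<exists>b\<in>B. v \<noteq> b \<and> cinner v b \<noteq> 0)"
proof -
  obtain s where s: "s \<in> S" "s \<notin> vec.span B"
    using assms(4) by blast
  obtain b0 where b0: "b0 \<in> B"
    using assms(3) by blast
  have "(transition_adj S)\<^sup>*\<^sup>* b0 s"
    using assms(1,2) b0 s(1) by (auto simp: connected_states_def)
  then obtain u v where uv: "transition_adj S u v" "u \<in> vec.span B" "v \<notin> vec.span B"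
    using rtranclp_crosses_boundary[where P = "\<lambda>x. x \<in> vec.span B"] b0 s(2) vec.span_base
    by blast
  have "v \<in> S" and "cinner v u \<noteq> 0"
    using uv(1) cinner_commute[of u v] by (auto simp: transition_adj_def)
  then obtain b where "b \<in> B" "cinner v b \<noteq> 0"
    using cinner_span_eq_zero[of B v u] uv(2) by blast
  moreover have "v \<noteq> b"
    using \<open>b \<in> B\<close> uv(3) vec.span_base by blast
  ultimately show ?thesis
    using \<open>v \<in> S\<close> uv(3) by blast
qed

lemma connected_spanning_set_contains_connected_basis:
  fixes S :: "(complex ^ 'n) set"
  assumes "connected_spanning_set S"
  shows "\<exists>B\<subseteq>S. connected_basis B"
proof -
  have pure: "\<forall>x\<in>S. pure_state x" and span_S: "vec.span S = UNIV"
    and conn_S: "connected_states S"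
    using assms by (auto simp: connected_spanning_set_def)
  define good where
    "good B \<longleftrightarrow> B \<subseteq> S \<and> B \<noteq> {} \<and> connected_states B \<and> vec.independent B" for B
  have "S \<noteq> {}"
    using span_S zero_neq_one[where 'a = "complex ^ 'n"] by auto
  then obtain s0 where "s0 \<in> S"
    by blast
  then have "good {s0}"
    using pure pure_state_nonzero
    by (auto simp: good_def connected_states_def vec.independent_insert)
  moreover have "card B < Suc (vec.dim (UNIV :: (complex ^ 'n) set))" if "good B" for B
    using vec.independent_card_le_dim[of B UNIV] that by (simp add: good_def)
  ultimately obtain B where "good B" and maximal: "\<And>B'. good B' \<Longrightarrow> card B' \<le> card B"
    using Lattices_Big.ex_has_greatest_nat[of good "{s0}" card] by blast
  then have B: "B \<subseteq> S" "B \<noteq> {}" "connected_states B" "vec.independent B"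
    by (auto simp: good_def)
  have "S \<subseteq> vec.span B"
  proof (rule ccontr)
    assume "\<not> S \<subseteq> vec.span B"
    then obtain v b where v: "v \<in> S" "v \<notin> vec.span B" and b: "b \<in> B" "v \<noteq> b" "cinner v b \<noteq> 0"
      using exists_adjacent_outside_span[OF conn_S B(1,2)] by blast
    then have "good (insert v B)"
      using B connected_states_insert[OF B(3) b] vec.span_base
      by (auto simp: good_def vec.independent_insert)
    then have "card (insert v B) \<le> card B"
      by (rule maximal)
    moreover have "v \<notin> B"
      using v(2) vec.span_base by blast
    ultimately show False
      using vec.finiteI_independent[OF B(4)] by simp
  qed
  then have "vec.span B = UNIV"
    using span_S vec.span_minimal[OF _ vec.subspace_span, of S B] by auto
  then have "connected_basis B"
    using B pure by (auto simp: connected_basis_def)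
  with B(1) show ?thesis
    by blast
qed

lemma connected_spanning_set_superset:
  fixes S T :: "(complex ^ 'n) set"
  assumes pure: "\<forall>x\<in>T. pure_state x" and "S \<subseteq> T" and "connected_spanning_set S"
  shows "connected_spanning_set T"
proof -
  have span_S: "vec.span S = UNIV" and conn_S: "connected_states S"
    using assms(3) by (auto simp: connected_spanning_set_def)
  have "\<exists>s\<in>S. (transition_adj T)\<^sup>*\<^sup>* x s" if x: "x \<in> T" for x
  proof (cases "x \<in> S")
    case False
    obtain s where "s \<in> S" "cinner x s \<noteq> 0"
      using pure_state_not_orthogonal_spanning[OF span_S] pure x by blast
    then have "transition_adj T x s"
      using assms(2) x False by (auto simp: transition_adj_def)
    with \<open>s \<in> S\<close> show ?thesis
      by (blast intro: r_into_rtranclp)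
  qed auto
  then have "connected_states T"
    by (rule connected_states_if_reaches[OF conn_S assms(2)])
  moreover have "vec.span T = UNIV"
    using vec.span_mono[OF assms(2)] span_S by auto
  ultimately show ?thesis
    using pure by (simp add: connected_spanning_set_def)
qed

theorem lemma5:
  shows "(\<forall>S :: (complex ^ 'n) set. connected_spanning_set S \<longrightarrow>
            (\<exists>B\<subseteq>S. connected_basis B))
       \<and> (\<forall>S T :: (complex ^ 'n) set. (\<forall>x\<in>T. pure_state x) \<and> S \<subseteq> T \<and> connected_spanning_set S \<longrightarrow>
            connected_spanning_set T)"
  using connected_spanning_set_contains_connected_basis connected_spanning_set_superset by blast

end
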